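(* For every $\epsilon>0$, every $n$-vertex tree $T$ with maximum degree $d$ admits a proper straight-line drawing such that no three vertices are collinear, the spanning ratio is at most $1+\epsilon$, the distance between any two vertices is at least $1$, and the width, the height, and the edge-length ratio are in $\mathcal O\!\left(n^{\frac{\log_2(2+\lceil 2/\epsilon\rceil)}{\log_2(d/(d-1))}}\cdot\frac{1}{\epsilon}\right)$.
   Context: A straight-line drawing maps vertices to distinct points and edges to straight-line segments; it is proper if no edge contains a vertex other than its end-vertices. In a straight-line drawing $\Gamma$, $\pi_\Gamma(u,v)$ is the minimum total Euclidean length of a path between $u$ and $v$, $\|uv\|_\Gamma$ is their Euclidean distance, and the spanning ratio is $\max_{u\neq v}\pi_\Gamma(u,v)/\|uv\|_\Gamma$. The edge-length ratio is the ratio between the lengths of the longest and shortest edges. The width and height of a drawing are those of the smallest axis-parallel rectangle containing it. The $\mathcal O$ notation hides absolute constants. *)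

theory Defs
  imports "HOL-Analysis.Analysis"
begin

definition simple_graph :: "'a set \<Rightarrow> 'a set set \<Rightarrow> bool" where
  "simple_graph V E \<longleftrightarrow> finite V \<and> (\<forall>e\<in>E. \<exists>u v. u \<noteq> v \<and> u \<in> V \<and> v \<in> V \<and> e = {u, v})"

definition adj :: "'a set set \<Rightarrow> 'a \<Rightarrow> 'a \<Rightarrow> bool" where
  "adj E u v \<longleftrightarrow> {u, v} \<in> E"

definition is_path :: "'a set \<Rightarrow> 'a set set \<Rightarrow> 'a list \<Rightarrow> bool" where
  "is_path V E ws \<longleftrightarrow> ws \<noteq> [] \<and> distinct ws \<and> set ws \<subseteq> V \<and>
     (\<forall>i. Suc i < length ws \<longrightarrow> adj E (ws ! i) (ws ! Suc i))"

definition connected_graph :: "'a set \<Rightarrow> 'a set set \<Rightarrow> bool" where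
  "connected_graph V E \<longleftrightarrow> (\<forall>u\<in>V. \<forall>v\<in>V. \<exists>ws. is_path V E ws \<and> hd ws = u \<and> last ws = v)"

definition acyclic_graph :: "'a set \<Rightarrow> 'a set set \<Rightarrow> bool" where
  "acyclic_graph V E \<longleftrightarrow> \<not> (\<exists>ws. is_path V E ws \<and> length ws \<ge> 3 \<and> adj E (last ws) (hd ws))"

definition is_tree :: "'a set \<Rightarrow> 'a set set \<Rightarrow> bool" where
  "is_tree V E \<longleftrightarrow> simple_graph V E \<and> V \<noteq> {} \<and> connected_graph V E \<and> acyclic_graph V E"

definition degree :: "'a set set \<Rightarrow> 'a \<Rightarrow> nat" where
  "degree E v = card {e \<in> E. v \<in> e}"

definition max_degree :: "'a set \<Rightarrow> 'a set set \<Rightarrow> nat" where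
  "max_degree V E = Max (degree E ` V)"

type_synonym point = "real \<times> real"

definition proper_drawing :: "'a set \<Rightarrow> 'a set set \<Rightarrow> ('a \<Rightarrow> point) \<Rightarrow> bool" where
  "proper_drawing V E p \<longleftrightarrow> inj_on p V \<and>
     (\<forall>u\<in>V. \<forall>v\<in>V. \<forall>w\<in>V. adj E u v \<longrightarrow> w \<noteq> u \<longrightarrow> w \<noteq> v \<longrightarrow> p w \<notin> closed_segment (p u) (p v))"

definition no_three_collinear :: "'a set \<Rightarrow> ('a \<Rightarrow> point) \<Rightarrow> bool" where
  "no_three_collinear V p \<longleftrightarrow>
     (\<forall>u\<in>V. \<forall>v\<in>V. \<forall>w\<in>V. u \<noteq> v \<longrightarrow> u \<noteq> w \<longrightarrow> v \<noteq> w \<longrightarrow> \<not> collinear {p u, p v, p w})"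

fun path_length :: "('a \<Rightarrow> point) \<Rightarrow> 'a list \<Rightarrow> real" where
  "path_length p (x # y # ws) = dist (p x) (p y) + path_length p (y # ws)"
| "path_length p _ = 0"

text \<open>Minimum total Euclidean length of a path between u and v (paths are finitely many).\<close>
definition graph_dist :: "'a set \<Rightarrow> 'a set set \<Rightarrow> ('a \<Rightarrow> point) \<Rightarrow> 'a \<Rightarrow> 'a \<Rightarrow> real" where
  "graph_dist V E p u v = Inf {path_length p ws | ws. is_path V E ws \<and> hd ws = u \<and> last ws = v}"

definition spanning_ratio :: "'a set \<Rightarrow> 'a set set \<Rightarrow> ('a \<Rightarrow> point) \<Rightarrow> real" where
  "spanning_ratio V E p =
     Sup {graph_dist V E p u v / dist (p u) (p v) | u v. u \<in> V \<and> v \<in> V \<and> u \<noteq> v}"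

definition edge_length_ratio :: "'a set set \<Rightarrow> ('a \<Rightarrow> point) \<Rightarrow> real" where
  "edge_length_ratio E p =
     Max {dist (p u) (p v) | u v. {u, v} \<in> E} / Min {dist (p u) (p v) | u v. {u, v} \<in> E}"

definition drawing_width :: "'a set \<Rightarrow> ('a \<Rightarrow> point) \<Rightarrow> real" where
  "drawing_width V p = Max ((\<lambda>v. fst (p v)) ` V) - Min ((\<lambda>v. fst (p v)) ` V)"

definition drawing_height :: "'a set \<Rightarrow> ('a \<Rightarrow> point) \<Rightarrow> real" where
  "drawing_height V p = Max ((\<lambda>v. snd (p v)) ` V) - Min ((\<lambda>v. snd (p v)) ` V)"

end

theory Submission
  imports Defs
begin

text \<open>Root the tree at a leaf, so that every vertex has at most D = d - 1 children, and first
  place the vertices on a line. Let Q = 1 + \<lceil>2/\<epsilon>\<rceil> and \<beta> = log (Q + 1) / log (1 + 1/D).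
  The subtree of a vertex, of size m, occupies an interval of length m^\<beta> starting at that
  vertex; the children of a vertex are placed after it in order of increasing subtree size, the
  one of rank j at distance Q^j plus the lengths of the smaller sibling intervals, each
  weighted by Q to the power of the difference of ranks. The choice of \<beta> gives
  Q^j (j + 1) \<le> (j + 1)^\<beta> for j < D, and with the ordering by size this makes the
  intervals of the children fit into the interval of their parent. Vertices on a common root
  path are joined by a monotone walk. Vertices in different child subtrees of w are joined
  through w, and since the gaps between sibling subtrees grow by the factor Q, this detour is
  shorter than (1 + \<epsilon>) times their distance by at least 2. Finally the line is bent into
  a very flat parabola: no three vertices become collinear, and distances grow by a factor
  so close to 1 that the additive 2 absorbs it.\<close>

section \<open>Walks\<close>

fun walk :: "'a set \<Rightarrow> 'a set set \<Rightarrow> 'a list \<Rightarrow> bool" where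
  "walk V E [] = False"
| "walk V E [x] = (x \<in> V)"
| "walk V E (x # y # ws) = (x \<in> V \<and> adj E x y \<and> walk V E (y # ws))"

lemma walk_iff:
  "walk V E ws \<longleftrightarrow>
     ws \<noteq> [] \<and> set ws \<subseteq> V \<and> (\<forall>i. Suc i < length ws \<longrightarrow> adj E (ws ! i) (ws ! Suc i))"
proof (induction V E ws rule: walk.induct)
  case (3 V E x y ws)
  let ?P = "\<lambda>zs. \<forall>i. Suc i < length zs \<longrightarrow> adj E (zs ! i) (zs ! Suc i)"
  have "?P (x # y # ws) \<longleftrightarrow> adj E x y \<and> ?P (y # ws)"
  proof (intro iffI conjI allI impI)
    show "adj E x y" if "?P (x # y # ws)" using that[rule_format, of 0] by simp
  next
    fix i assume "?P (x # y # ws)" "Suc i < length (y # ws)"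
    then show "adj E ((y # ws) ! i) ((y # ws) ! Suc i)" by (metis length_Cons nth_Cons_Suc Suc_less_eq)
  next
    fix i assume "adj E x y \<and> ?P (y # ws)" "Suc i < length (x # y # ws)"
    then show "adj E ((x # y # ws) ! i) ((x # y # ws) ! Suc i)" by (cases i) auto
  qed
  then show ?case using "3.IH" by auto
qed auto

lemma is_path_iff_walk: "is_path V E ws \<longleftrightarrow> walk V E ws \<and> distinct ws"
  unfolding is_path_def walk_iff by auto

lemma walk_not_Nil: "walk V E ws \<Longrightarrow> ws \<noteq> []"
  by (cases ws) auto

lemma walk_append_iff: "walk V E (xs @ y # ys) \<longleftrightarrow> walk V E (xs @ [y]) \<and> walk V E (y # ys)"
proof (induction xs)
  case Nil
  then show ?case by (cases ys) auto
next
  case (Cons a xs)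
  then show ?case by (cases xs) auto
qed

lemma adj_commute: "adj E x y \<longleftrightarrow> adj E y x"
  unfolding adj_def by (simp add: insert_commute)

lemma walk_rev_iff: "walk V E (rev ws) \<longleftrightarrow> walk V E ws"
proof (induction V E ws rule: walk.induct)
  case (3 V E x y ws)
  have "walk V E (rev (x # y # ws)) \<longleftrightarrow> walk V E (y # ws) \<and> walk V E [y, x]"
    using walk_append_iff[of V E "rev ws" y "[x]"] 3 by simp
  then show ?case by (cases ws) (auto simp: adj_commute)
qed auto

lemma walk_join:
  assumes "walk V E ws1" "walk V E ws2" "last ws1 = last ws2"
  shows "walk V E (butlast ws1 @ rev ws2) \<and>
    hd (butlast ws1 @ rev ws2) = hd ws1 \<and> last (butlast ws1 @ rev ws2) = hd ws2"
proof -
  obtain t where t: "rev ws2 = last ws2 # t"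
    using assms(2) walk_not_Nil by (metis hd_rev list.collapse rev_is_Nil_conv)
  have ws1: "ws1 = butlast ws1 @ [last ws2]"
    using assms(1,3) walk_not_Nil by (metis append_butlast_last_id)
  then have "walk V E (butlast ws1 @ last ws2 # t) \<longleftrightarrow> walk V E ws1 \<and> walk V E (last ws2 # t)"
    using walk_append_iff[of V E "butlast ws1" "last ws2" t] by simp
  moreover have "hd (butlast ws1 @ last ws2 # t) = hd ws1" by (subst (2) ws1) (simp add: hd_append)
  moreover have "last (last ws2 # t) = hd ws2"
    using assms(2) walk_not_Nil last_rev[of ws2] unfolding t by simp
  moreover have "walk V E (last ws2 # t)" using assms(2) walk_rev_iff[of V E ws2] unfolding t by simp
  ultimately show ?thesis using assms(1) unfolding t by simp
qed

lemma walk_drop: "walk V E ws \<Longrightarrow> i < length ws \<Longrightarrow> walk V E (drop i ws)"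
  using walk_append_iff[of V E "take i ws" "ws ! i" "drop (Suc i) ws"]
  by (simp add: id_take_nth_drop[symmetric] Cons_nth_drop_Suc)

lemma walk_snoc: "walk V E ws \<Longrightarrow> x \<in> V \<Longrightarrow> adj E (last ws) x \<Longrightarrow> walk V E (ws @ [x])"
proof -
  assume ws: "walk V E ws" and "x \<in> V" "adj E (last ws) x"
  then have "walk V E [last ws, x]"
    using walk_iff[of V E ws] walk_not_Nil[OF ws] by auto
  moreover have "ws = butlast ws @ [last ws]" using walk_not_Nil[OF ws] by simp
  ultimately show ?thesis
    using ws walk_append_iff[of V E "butlast ws" "last ws" "[x]"] by (metis append.assoc append_Cons append_Nil)
qed

lemma path_length_append:
  "path_length p (xs @ y # ys) = path_length p (xs @ [y]) + path_length p (y # ys)"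
proof (induction xs)
  case Nil
  then show ?case by (cases ys) auto
next
  case (Cons a xs)
  then show ?case by (cases xs) auto
qed

lemma path_length_nonneg: "path_length p ws \<ge> 0"
  by (induction p ws rule: path_length.induct) auto

lemma walk_shortens_to_path:
  assumes "walk V E ws"
  shows "\<exists>ps. is_path V E ps \<and> hd ps = hd ws \<and> last ps = last ws \<and>
              path_length p ps \<le> path_length p ws"
  using assms
proof (induction "length ws" arbitrary: ws rule: less_induct)
  case less
  show ?case
  proof (cases "distinct ws")
    case True
    then show ?thesis using less.prems by (auto simp: is_path_iff_walk)
  next
    case False
    then obtain xs y ys zs where ws: "ws = xs @ [y] @ ys @ [y] @ zs"
      using not_distinct_decomp by blast
    define ws' where "ws' = xs @ y # zs"
    have "walk V E (xs @ [y])" "walk V E (y # ys @ y # zs)"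
      using less.prems walk_append_iff[of V E xs y "ys @ y # zs"] ws by auto
    then have "walk V E ws'"
      using walk_append_iff[of V E "y # ys" y zs] walk_append_iff[of V E xs y zs]
      unfolding ws'_def by simp
    moreover have "length ws' < length ws" using ws ws'_def by simp
    ultimately obtain ps where ps: "is_path V E ps" "hd ps = hd ws'" "last ps = last ws'"
      "path_length p ps \<le> path_length p ws'"
      using less.hyps by blast
    have "path_length p ws = path_length p (xs @ [y]) + path_length p (y # ys @ y # zs)"
      using ws path_length_append[of p xs y "ys @ y # zs"] by simp
    also have "path_length p (y # ys @ y # zs) = path_length p (y # ys @ [y]) + path_length p (y # zs)"
      using path_length_append[of p "y # ys" y zs] by simp
    finally have "path_length p ws = path_length p ws' + path_length p (y # ys @ [y])"
      using path_length_append[of p xs y zs] unfolding ws'_def by simp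
    then have "path_length p ws' \<le> path_length p ws"
      using path_length_nonneg[of p "y # ys @ [y]"] by simp
    moreover have "hd ws' = hd ws" "last ws' = last ws"
      using ws ws'_def by (cases xs; simp)+
    ultimately show ?thesis using ps by auto
  qed
qed

lemma graph_dist_le_path_length:
  assumes "walk V E ws" "hd ws = u" "last ws = v"
  shows "graph_dist V E p u v \<le> path_length p ws"
proof -
  obtain ps where ps: "is_path V E ps" "hd ps = u" "last ps = v"
    "path_length p ps \<le> path_length p ws"
    using walk_shortens_to_path[OF assms(1), of p] assms by auto
  have "graph_dist V E p u v \<le> path_length p ps"
    unfolding graph_dist_def
  proof (rule cInf_lower)
    show "bdd_below {path_length p ws |ws. is_path V E ws \<and> hd ws = u \<and> last ws = v}"
      by (rule bdd_belowI[of _ 0]) (auto simp: path_length_nonneg)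
  qed (use ps in blast)
  with ps(4) show ?thesis by linarith
qed

fun variation :: "('a \<Rightarrow> real) \<Rightarrow> 'a list \<Rightarrow> real" where
  "variation x (u # v # ws) = \<bar>x u - x v\<bar> + variation x (v # ws)"
| "variation x _ = 0"

lemma variation_append:
  "variation x (xs @ y # ys) = variation x (xs @ [y]) + variation x (y # ys)"
proof (induction xs)
  case Nil
  then show ?case by (cases ys) auto
next
  case (Cons a xs)
  then show ?case by (cases xs) auto
qed

lemma variation_rev: "variation x (rev ws) = variation x ws"
proof (induction x ws rule: variation.induct)
  case (1 x u v ws)
  have "variation x (rev (u # v # ws)) = variation x (rev ws @ [v]) + variation x [v, u]"
    using variation_append[of x "rev ws" v "[u]"] by simp
  then show ?case using 1 by (simp add: abs_minus_commute)
qed auto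

lemma variation_nonneg: "variation x ws \<ge> 0"
  by (induction x ws rule: variation.induct) auto

lemma variation_join:
  assumes "ws1 \<noteq> []" "ws2 \<noteq> []" "last ws1 = last ws2"
  shows "variation x (butlast ws1 @ rev ws2) = variation x ws1 + variation x ws2"
proof -
  obtain t where t: "rev ws2 = last ws2 # t"
    using assms(2) by (metis hd_rev list.collapse rev_is_Nil_conv)
  have "ws1 = butlast ws1 @ [last ws2]"
    using assms(1,3) by (metis append_butlast_last_id)
  then have "variation x (butlast ws1 @ last ws2 # t) = variation x ws1 + variation x (last ws2 # t)"
    using variation_append[of x "butlast ws1" "last ws2" t] by simp
  moreover have "variation x (last ws2 # t) = variation x ws2"
    using variation_rev[of x ws2] unfolding t .
  ultimately show ?thesis unfolding t by simp
qed

lemma path_length_le_variation: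
  assumes "set ws \<subseteq> A" "\<And>a b. a \<in> A \<Longrightarrow> b \<in> A \<Longrightarrow> dist (p a) (p b) \<le> K * \<bar>x a - x b\<bar>"
  shows "path_length p ws \<le> K * variation x ws"
  using assms(1)
proof (induction ws rule: induct_list012)
  case (3 u v ws)
  then have "dist (p u) (p v) \<le> K * \<bar>x u - x v\<bar>" "path_length p (v # ws) \<le> K * variation x (v # ws)"
    using assms(2)[of u v] by auto
  then show ?case by (simp add: distrib_left)
qed auto

definition short_walk :: "'a set \<Rightarrow> 'a set set \<Rightarrow> real \<Rightarrow> ('a \<Rightarrow> real) \<Rightarrow> 'a \<Rightarrow> 'a \<Rightarrow> bool" where
  "short_walk V E \<epsilon> x u v \<longleftrightarrow> (\<exists>ws. walk V E ws \<and> hd ws = u \<and> last ws = v \<and>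
     (variation x ws \<le> \<bar>x u - x v\<bar> \<or> variation x ws \<le> (1 + \<epsilon>) * \<bar>x u - x v\<bar> - 2))"

lemma short_walk_sym: "short_walk V E \<epsilon> x u v \<Longrightarrow> short_walk V E \<epsilon> x v u"
  unfolding short_walk_def
  by (metis abs_minus_commute hd_rev last_rev variation_rev walk_not_Nil walk_rev_iff)

lemma short_walk_monotone:
  "walk V E ws \<Longrightarrow> hd ws = u \<Longrightarrow> last ws = v \<Longrightarrow> variation x ws = \<bar>x u - x v\<bar> \<Longrightarrow>
    short_walk V E \<epsilon> x u v"
  unfolding short_walk_def by auto

lemma simple_graph_edgeD:
  "simple_graph V E \<Longrightarrow> {u, v} \<in> E \<Longrightarrow> u \<in> V \<and> v \<in> V \<and> u \<noteq> v"
  unfolding simple_graph_def by (metis doubleton_eq_iff insert_absorb2 singleton_insert_inj_eq)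

lemma simple_graph_edge_at:
  assumes "simple_graph V E" "e \<in> E" "w \<in> e"
  obtains x where "x \<noteq> w" "x \<in> V" "w \<in> V" "e = {w, x}"
proof -
  obtain a b where ab: "a \<noteq> b" "a \<in> V" "b \<in> V" "e = {a, b}"
    using assms(1,2) unfolding simple_graph_def by blast
  show ?thesis
  proof (cases "w = a")
    case True
    then show ?thesis using that[of b] ab by simp
  next
    case False
    then show ?thesis using that[of a] ab assms(3) by (auto simp: insert_commute)
  qed
qed

lemma simple_graph_finite_edges:
  assumes "simple_graph V E"
  shows "finite E"
proof (rule finite_subset)
  show "E \<subseteq> Pow V"
  proof
    fix e assume "e \<in> E"
    then obtain a b where "a \<in> V" "b \<in> V" "e = {a, b}"
      using assms unfolding simple_graph_def by blast
    then show "e \<in> Pow V" by simp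
  qed
  show "finite (Pow V)" using assms unfolding simple_graph_def by simp
qed

lemma degree_le_max_degree: "simple_graph V E \<Longrightarrow> u \<in> V \<Longrightarrow> degree E u \<le> max_degree V E"
  unfolding max_degree_def simple_graph_def by auto

lemma longest_path_end_degree:
  assumes sg: "simple_graph V E" and ac: "acyclic_graph V E" and wp: "is_path V E ws"
    and longest: "\<And>ys. is_path V E ys \<Longrightarrow> length ys \<le> length ws"
  shows "degree E (last ws) \<le> 1"
proof -
  define w where "w = last ws"
  define pre where "pre = ws ! (length ws - 2)"
  have wsne: "ws \<noteq> []" using wp unfolding is_path_def by simp
  have "e = {w, pre}" if e: "e \<in> E" "w \<in> e" for e
  proof -
    obtain x where x: "x \<noteq> w" "x \<in> V" "e = {w, x}"
      using simple_graph_edge_at[OF sg e] by blast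
    have wx: "adj E w x" unfolding adj_def using x e by simp
    have "x \<in> set ws"
    proof (rule ccontr)
      assume "x \<notin> set ws"
      then have "is_path V E (ws @ [x])"
        using wp x wx walk_snoc[of V E ws x] unfolding is_path_iff_walk w_def by simp
      then show False using longest[of "ws @ [x]"] by simp
    qed
    then obtain i where i: "i < length ws" "ws ! i = x" by (meson in_set_conv_nth)
    have "i \<noteq> length ws - 1" using i x(1) w_def wsne by (metis last_conv_nth)
    moreover have "i = length ws - 2"
    proof (rule ccontr)
      assume i2: "i \<noteq> length ws - 2"
      define ys where "ys = drop i ws"
      have "is_path V E ys"
        using wp i walk_drop[of V E ws i] unfolding ys_def is_path_iff_walk by simp
      moreover have "hd ys = x" "last ys = w"
        using i unfolding ys_def w_def by (auto simp: hd_drop_conv_nth)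
      moreover have "length ys \<ge> 3" using i i2 \<open>i \<noteq> length ws - 1\<close> unfolding ys_def by simp
      ultimately show False using ac wx unfolding acyclic_graph_def by blast
    qed
    ultimately show ?thesis using x pre_def i by simp
  qed
  then have "{e \<in> E. w \<in> e} \<subseteq> {{w, pre}}" by blast
  then have "card {e \<in> E. w \<in> e} \<le> card {{w, pre}}" by (rule card_mono[rotated]) simp
  then have "card {e \<in> E. w \<in> e} \<le> 1" by simp
  then show ?thesis unfolding degree_def w_def .
qed

lemma tree_has_leaf:
  assumes "is_tree V E"
  obtains r where "r \<in> V" "degree E r \<le> 1"
proof -
  have sg: "simple_graph V E" and "V \<noteq> {}" and ac: "acyclic_graph V E"
    using assms unfolding is_tree_def by auto
  then obtain v where v: "v \<in> V" by blast
  have "length ys < Suc (card V)" if "is_path V E ys" for ys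
  proof -
    have "length ys = card (set ys)" using that distinct_card unfolding is_path_def by metis
    also have "\<dots> \<le> card V"
      using that sg card_mono unfolding is_path_def simple_graph_def by metis
    finally show ?thesis by simp
  qed
  moreover have "is_path V E [v]" using v unfolding is_path_def by simp
  ultimately obtain ws where "is_path V E ws" "\<And>ys. is_path V E ys \<Longrightarrow> length ys \<le> length ws"
    using ex_has_greatest_nat[of "is_path V E" "[v]" length "Suc (card V)"] by blast
  moreover have "last ws \<in> V" using \<open>is_path V E ws\<close> unfolding is_path_def by auto
  ultimately show ?thesis using that longest_path_end_degree[OF sg ac] by blast
qed

section \<open>Rooted trees\<close>

text \<open>The root is its own parent; \<^term>\<open>depth\<close> is any rank that decreases towards the root,
  witnessing that iterating \<^term>\<open>parent\<close> reaches it.\<close>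
locale rooted_tree =
  fixes V :: "'a set" and E :: "'a set set" and r :: 'a
    and parent :: "'a \<Rightarrow> 'a" and depth :: "'a \<Rightarrow> nat"
  assumes finite_V: "finite V" and root_in_V: "r \<in> V" and parent_root: "parent r = r"
    and parent_in_V: "\<And>v. v \<in> V \<Longrightarrow> v \<noteq> r \<Longrightarrow> parent v \<in> V"
    and parent_edge: "\<And>v. v \<in> V \<Longrightarrow> v \<noteq> r \<Longrightarrow> {v, parent v} \<in> E"
    and depth_parent_less: "\<And>v. v \<in> V \<Longrightarrow> v \<noteq> r \<Longrightarrow> depth (parent v) < depth v"
begin

definition ancestor :: "'a \<Rightarrow> 'a \<Rightarrow> bool" where
  "ancestor u v \<longleftrightarrow> (\<exists>k. (parent ^^ k) v = u)"

definition subtree :: "'a \<Rightarrow> 'a set" where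
  "subtree u = {v \<in> V. ancestor u v}"

definition children :: "'a \<Rightarrow> 'a set" where
  "children u = {c \<in> V. c \<noteq> r \<and> parent c = u}"

definition subtree_size :: "'a \<Rightarrow> nat" where
  "subtree_size u = card (subtree u)"

lemma parent_iter_in_V: "v \<in> V \<Longrightarrow> (parent ^^ k) v \<in> V"
proof (induction k)
  case (Suc k)
  then show ?case using parent_in_V parent_root root_in_V by (cases "(parent ^^ k) v = r") auto
qed simp

lemma parent_iter_root: "(parent ^^ k) r = r"
  by (induction k) (auto simp: parent_root)

lemma depth_parent_iter:
  "v \<in> V \<Longrightarrow> (parent ^^ k) v \<noteq> r \<Longrightarrow> depth ((parent ^^ k) v) + k \<le> depth v"
proof (induction k)
  case (Suc k)
  let ?y = "(parent ^^ k) v"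
  have y: "?y \<noteq> r" using Suc.prems parent_root by auto
  have "depth (parent ?y) < depth ?y" using depth_parent_less[OF parent_iter_in_V[OF Suc.prems(1)] y] .
  then show ?case using Suc.IH[OF Suc.prems(1) y] by simp
qed simp

lemma ancestor_refl: "ancestor v v"
  unfolding ancestor_def by (rule exI[of _ 0]) simp

lemma ancestor_trans: "ancestor a b \<Longrightarrow> ancestor b c \<Longrightarrow> ancestor a c"
  unfolding ancestor_def by (metis funpow_add comp_apply)

lemma ancestor_parent: "ancestor (parent v) v"
  unfolding ancestor_def by (rule exI[of _ 1]) simp

lemma ancestor_antisym:
  assumes ab: "ancestor a b" and ba: "ancestor b a" and bV: "b \<in> V"
  shows "a = b"
proof -
  obtain i where i: "(parent ^^ i) b = a" using ab ancestor_def by blast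
  obtain j where j: "(parent ^^ j) a = b" using ba ancestor_def by blast
  have aV: "a \<in> V" using i parent_iter_in_V bV by blast
  show "a = b"
  proof (cases "a = r \<or> b = r")
    case True
    then show ?thesis using i j parent_iter_root by auto
  next
    case False
    then have "depth a + i \<le> depth b" "depth b + j \<le> depth a"
      using depth_parent_iter[OF bV, of i] depth_parent_iter[OF aV, of j] i j by auto
    then have "i = 0" by simp
    then show ?thesis using i by simp
  qed
qed

lemma ancestor_iff_parent:
  assumes "v \<in> V" "v \<noteq> r"
  shows "ancestor u v \<longleftrightarrow> u = v \<or> ancestor u (parent v)"
proof
  assume "ancestor u v"
  then obtain k where k: "(parent ^^ k) v = u" using ancestor_def by blast
  show "u = v \<or> ancestor u (parent v)"
  proof (cases k)
    case 0 then show ?thesis using k by simp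
  next
    case (Suc k')
    then have "(parent ^^ k') (parent v) = u" using k by (simp add: funpow_Suc_right del: funpow.simps)
    then show ?thesis unfolding ancestor_def by blast
  qed
next
  assume "u = v \<or> ancestor u (parent v)"
  then show "ancestor u v" using ancestor_refl ancestor_trans ancestor_parent by blast
qed

lemma ancestor_root_eq: "ancestor u r \<Longrightarrow> u = r"
  unfolding ancestor_def using parent_iter_root by auto

lemma not_ancestor_parent:
  assumes "v \<in> V" "v \<noteq> r"
  shows "\<not> ancestor v (parent v)"
proof
  assume "ancestor v (parent v)"
  then have "parent v = v" using ancestor_antisym[OF ancestor_parent _ assms(1)] by blast
  then show False using depth_parent_less[OF assms] by simp
qed

lemma root_ancestor: "v \<in> V \<Longrightarrow> ancestor r v"
proof (induction "depth v" arbitrary: v rule: less_induct)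
  case less
  show ?case
  proof (cases "v = r")
    case True
    then show ?thesis by (simp add: ancestor_refl)
  next
    case False
    then have "ancestor r (parent v)"
      using less.hyps depth_parent_less parent_in_V less.prems by blast
    then show ?thesis using ancestor_iff_parent[OF less.prems False] by blast
  qed
qed

lemma ancestors_linear: "ancestor a v \<Longrightarrow> ancestor b v \<Longrightarrow> ancestor a b \<or> ancestor b a"
proof -
  assume "ancestor a v" "ancestor b v"
  then obtain i j where i: "(parent ^^ i) v = a" and j: "(parent ^^ j) v = b"
    using ancestor_def by blast
  show ?thesis
  proof (cases "i \<le> j")
    case True
    then have "(parent ^^ (j - i)) a = b"
      using i j funpow_add[of "j - i" i parent] by (metis comp_apply le_add_diff_inverse2)
    then show ?thesis unfolding ancestor_def by blast
  next
    case False
    then have "(parent ^^ (i - j)) b = a" using i j funpow_add[of "i - j" j parent]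
      by (metis comp_apply le_add_diff_inverse2 nat_le_linear)
    then show ?thesis unfolding ancestor_def by blast
  qed
qed

lemma finite_subtree: "finite (subtree u)"
  unfolding subtree_def using finite_V by simp

lemma finite_children: "finite (children u)"
  unfolding children_def using finite_V by simp

lemma self_in_subtree: "w \<in> V \<Longrightarrow> w \<in> subtree w"
  unfolding subtree_def by (simp add: ancestor_refl)

lemma childrenD: "c \<in> children w \<Longrightarrow> c \<in> V \<and> c \<noteq> r \<and> parent c = w"
  unfolding children_def by simp

lemma child_in_V: "c \<in> children w \<Longrightarrow> w \<in> V"
  using childrenD parent_in_V by blast

lemma subtree_child_subset: "c \<in> children w \<Longrightarrow> subtree c \<subseteq> subtree w"
  unfolding subtree_def using ancestor_trans ancestor_parent childrenD by blast

lemma not_in_subtree_child: "c \<in> children w \<Longrightarrow> w \<notin> subtree c"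
  unfolding subtree_def using childrenD not_ancestor_parent by blast

lemma subtree_child_cases:
  "v \<in> subtree w \<Longrightarrow> v \<noteq> w \<Longrightarrow> \<exists>c\<in>children w. v \<in> subtree c"
proof (induction "depth v" arbitrary: v rule: less_induct)
  case less
  have vV: "v \<in> V" and a: "ancestor w v" using less.prems unfolding subtree_def by auto
  have vr: "v \<noteq> r" using a ancestor_root_eq less.prems by blast
  have a2: "ancestor w (parent v)" using ancestor_iff_parent[OF vV vr] a less.prems(2) by auto
  show ?case
  proof (cases "parent v = w")
    case True
    then have "v \<in> children w" unfolding children_def using vV vr by simp
    then show ?thesis using self_in_subtree vV by blast
  next
    case False
    have "parent v \<in> subtree w" unfolding subtree_def using a2 parent_in_V vV vr by simp
    then obtain c where c: "c \<in> children w" "parent v \<in> subtree c"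
      using less.hyps[of "parent v"] depth_parent_less[OF vV vr] False by blast
    then have "ancestor c v" unfolding subtree_def using ancestor_iff_parent[OF vV vr] by blast
    then show ?thesis using c vV unfolding subtree_def by blast
  qed
qed

lemma children_subtrees_disjoint:
  assumes c1: "c1 \<in> children w" and c2: "c2 \<in> children w"
    and "v \<in> subtree c1" "v \<in> subtree c2"
  shows "c1 = c2"
proof -
  have no_nesting: "\<not> ancestor c c'" if c: "c \<in> children w" and c': "c' \<in> children w"
    and "c \<noteq> c'" for c c'
  proof
    assume "ancestor c c'"
    then have "ancestor c w" using ancestor_iff_parent[of c' c] childrenD[OF c'] \<open>c \<noteq> c'\<close> by blast
    then show False using not_ancestor_parent childrenD[OF c] by blast
  qed
  have "ancestor c1 c2 \<or> ancestor c2 c1"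
    using assms ancestors_linear unfolding subtree_def by blast
  then show ?thesis using no_nesting c1 c2 by blast
qed

lemma subtree_eq:
  assumes "w \<in> V"
  shows "subtree w = insert w (\<Union>c\<in>children w. subtree c)"
proof (rule equalityI)
  show "subtree w \<subseteq> insert w (\<Union>c\<in>children w. subtree c)"
    using subtree_child_cases by blast
  show "insert w (\<Union>c\<in>children w. subtree c) \<subseteq> subtree w"
    using self_in_subtree[OF assms] subtree_child_subset by blast
qed

lemma subtree_size_eq: "w \<in> V \<Longrightarrow> subtree_size w = 1 + (\<Sum>c\<in>children w. subtree_size c)"
proof -
  assume w: "w \<in> V"
  have "card (\<Union>c\<in>children w. subtree c) = (\<Sum>c\<in>children w. card (subtree c))"
    by (rule card_UN_disjoint) (use finite_children finite_subtree children_subtrees_disjoint in blast)+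
  moreover have "w \<notin> (\<Union>c\<in>children w. subtree c)" using not_in_subtree_child by blast
  ultimately show ?thesis unfolding subtree_size_def using subtree_eq[OF w] finite_children finite_subtree
    by (simp add: card_insert_disjoint)
qed

lemma subtree_size_pos: "w \<in> V \<Longrightarrow> subtree_size w \<ge> 1"
  unfolding subtree_size_def using self_in_subtree finite_subtree card_0_eq by fastforce

lemma subtree_root: "subtree r = V"
  unfolding subtree_def using root_ancestor by auto

lemma subtree_size_child_less: "c \<in> children w \<Longrightarrow> subtree_size c < subtree_size w"
proof -
  assume c: "c \<in> children w"
  have "subtree c \<subset> subtree w"
    using subtree_child_subset[OF c] not_in_subtree_child[OF c] self_in_subtree[OF child_in_V[OF c]]
    by blast
  then show ?thesis unfolding subtree_size_def using finite_subtree psubset_card_mono by blast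
qed

lemma card_children_less_subtree_size: "w \<in> V \<Longrightarrow> card (children w) < subtree_size w"
proof -
  assume w: "w \<in> V"
  have "card (children w) * 1 \<le> (\<Sum>c\<in>children w. subtree_size c)"
    using sum_bounded_below[of "children w" 1 subtree_size] subtree_size_pos childrenD by fastforce
  then show ?thesis using subtree_size_eq[OF w] by simp
qed

lemma parent_chain_walk:
  assumes mono: "\<And>u. u \<in> V \<Longrightarrow> u \<noteq> r \<Longrightarrow> x (parent u) \<le> x u"
    and "v \<in> V" "ancestor w v"
  shows "\<exists>ws. walk V E ws \<and> hd ws = v \<and> last ws = w \<and> variation x ws = x v - x w"
  using assms(2,3)
proof (induction "depth v" arbitrary: v rule: less_induct)
  case less
  show ?case
  proof (cases "v = w")
    case True
    then show ?thesis using less.prems by (intro exI[of _ "[v]"]) simp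
  next
    case False
    have vr: "v \<noteq> r" using ancestor_root_eq less.prems False by blast
    have "ancestor w (parent v)"
      using ancestor_iff_parent[OF less.prems(1) vr, of w] less.prems(2) False by simp
    then obtain ws where ws: "walk V E ws" "hd ws = parent v" "last ws = w"
      "variation x ws = x (parent v) - x w"
      using less.hyps[of "parent v"] depth_parent_less[OF less.prems(1) vr] parent_in_V[OF less.prems(1) vr]
      by blast
    obtain rest where rest: "ws = parent v # rest" using ws(1,2) by (cases ws) auto
    have "walk V E (v # ws)" using ws(1) rest less.prems(1) parent_edge[OF less.prems(1) vr]
      by (simp add: adj_def)
    moreover have "variation x (v # ws) = x v - x w"
      using rest ws(4) mono[OF less.prems(1) vr] by simp
    ultimately show ?thesis using ws(3) rest by (intro exI[of _ "v # ws"]) simp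
  qed
qed

lemma card_children_le_degree:
  assumes sg: "simple_graph V E" and u: "u \<in> V"
  shows "card (children u) + (if u = r then 0 else 1) \<le> degree E u"
proof -
  define S where "S = {e \<in> E. u \<in> e}"
  have fS: "finite S" using simple_graph_finite_edges[OF sg] S_def by simp
  have inj: "inj_on (\<lambda>c. {c, u}) (children u)"
    using childrenD by (auto simp: inj_on_def doubleton_eq_iff)
  have img: "(\<lambda>c. {c, u}) ` children u \<subseteq> S"
    using childrenD parent_edge S_def by auto
  have card_img: "card ((\<lambda>c. {c, u}) ` children u) = card (children u)"
    using card_image[OF inj] .
  show ?thesis
  proof (cases "u = r")
    case True
    then show ?thesis
      using card_mono[OF fS img] card_img unfolding degree_def S_def by simp
  next
    case False
    have "u \<notin> children u" using childrenD depth_parent_less by fastforce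
    moreover have "parent u \<notin> children u"
      using childrenD not_ancestor_parent[OF u False] ancestor_parent by metis
    ultimately have "{u, parent u} \<notin> (\<lambda>c. {c, u}) ` children u"
      by (auto simp: doubleton_eq_iff)
    moreover have "{u, parent u} \<in> S" using parent_edge[OF u False] S_def by simp
    ultimately have "card (insert {u, parent u} ((\<lambda>c. {c, u}) ` children u)) \<le> card S"
      using img card_mono[OF fS] by (metis insert_subset)
    then show ?thesis
      using False card_img finite_subset[OF img fS] \<open>{u, parent u} \<notin> _\<close>
      unfolding degree_def S_def by simp
  qed
qed

end

definition hop_dist :: "'a set \<Rightarrow> 'a set set \<Rightarrow> 'a \<Rightarrow> 'a \<Rightarrow> nat" where
  "hop_dist V E r v = (LEAST k. \<exists>ws. walk V E ws \<and> hd ws = r \<and> last ws = v \<and> length ws = Suc k)"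

lemma connected_closer_neighbour:
  assumes conn: "connected_graph V E" and r: "r \<in> V" and v: "v \<in> V" "v \<noteq> r"
  shows "\<exists>u\<in>V. {v, u} \<in> E \<and> hop_dist V E r u < hop_dist V E r v"
proof -
  obtain ws0 where "walk V E ws0" "hd ws0 = r" "last ws0 = v"
    using conn r v unfolding connected_graph_def is_path_iff_walk by blast
  then have "\<exists>k ws. walk V E ws \<and> hd ws = r \<and> last ws = v \<and> length ws = Suc k"
    using walk_not_Nil by (metis Suc_pred length_greater_0_conv)
  then have "\<exists>ws. walk V E ws \<and> hd ws = r \<and> last ws = v \<and> length ws = Suc (hop_dist V E r v)"
    unfolding hop_dist_def by (rule LeastI_ex)
  then obtain ws where ws: "walk V E ws" "hd ws = r" "last ws = v"
    "length ws = Suc (hop_dist V E r v)"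
    by blast
  obtain b' where b': "ws = b' @ [v]"
    using ws(1,3) walk_not_Nil by (metis append_butlast_last_id)
  have "b' \<noteq> []" using b' ws(2) v by auto
  then obtain b u where bu: "ws = b @ [u, v]"
    using b' by (metis append.assoc append_Cons append_Nil rev_exhaust)
  have walk_bu: "walk V E (b @ [u])" and uv: "walk V E [u, v]"
    using walk_append_iff[of V E b u "[v]"] ws(1) bu by auto
  have "hd (b @ [u]) = r" using ws(2) bu by (cases b) auto
  then have "hop_dist V E r u \<le> length b"
    unfolding hop_dist_def using walk_bu by (intro Least_le) auto
  moreover have "length b < hop_dist V E r v" using ws(4) bu by simp
  moreover have "u \<in> V" "{v, u} \<in> E" using uv by (auto simp: adj_def insert_commute)
  ultimately show ?thesis by auto
qed

lemma connected_graph_rooting: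
  assumes "connected_graph V E" "finite V" "r \<in> V"
  shows "\<exists>parent depth. rooted_tree V E r parent depth"
proof -
  define parent where "parent v = (if v \<in> V \<and> v \<noteq> r
    then SOME u. u \<in> V \<and> {v, u} \<in> E \<and> hop_dist V E r u < hop_dist V E r v else r)" for v
  have "parent v \<in> V \<and> {v, parent v} \<in> E \<and> hop_dist V E r (parent v) < hop_dist V E r v"
    if "v \<in> V" "v \<noteq> r" for v
    using someI_ex[OF connected_closer_neighbour[OF assms(1,3) that, unfolded Bex_def]] that
    unfolding parent_def by simp
  then have "rooted_tree V E r parent (hop_dist V E r)"
    using assms by unfold_locales (auto simp: parent_def)
  then show ?thesis by blast
qed

section \<open>A layout of a rooted tree on a line\<close>

locale tree_layout = rooted_tree V E r parent depth
  for V :: "'a::linorder set" and E r parent depth +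
  fixes D :: nat and Q \<beta> :: real
  assumes card_children_le: "\<And>u. u \<in> V \<Longrightarrow> card (children u) \<le> D"
    and Q_ge_1: "Q \<ge> 1" and beta_ge_1: "\<beta> \<ge> 1"
    and growth: "\<And>j. j + 1 \<le> D \<Longrightarrow> Q ^ j * real (j + 1) \<le> real (j + 1) powr \<beta>"
begin

definition extent :: "nat \<Rightarrow> real" where
  "extent k = real k powr \<beta>"

definition before :: "'a \<Rightarrow> 'a \<Rightarrow> bool" where
  "before a b \<longleftrightarrow> subtree_size a < subtree_size b \<or> (subtree_size a = subtree_size b \<and> a < b)"

definition rank :: "'a \<Rightarrow> nat" where
  "rank c = card {c' \<in> children (parent c). before c' c}"

text \<open>The subtree of a child c occupies the interval of length \<^term>\<open>extent (subtree_size c)\<close>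
  that starts \<^term>\<open>offset c\<close> after its parent.\<close>
definition offset :: "'a \<Rightarrow> real" where
  "offset c = Q ^ rank c +
     (\<Sum>c' \<in> {c' \<in> children (parent c). before c' c}. Q ^ (rank c - rank c') * extent (subtree_size c'))"

definition coord :: "'a \<Rightarrow> real" where
  "coord v = (\<Sum>u \<in> {u \<in> V. u \<noteq> r \<and> ancestor u v}. offset u)"

lemma extent_nonneg: "extent k \<ge> 0"
  unfolding extent_def by simp

lemma extent_eq_mult: "k \<ge> 1 \<Longrightarrow> extent k = real k * real k powr (\<beta> - 1)"
  unfolding extent_def using powr_add[of "real k" 1 "\<beta> - 1"] by simp

lemma offset_ge_1: "offset c \<ge> 1"
proof -
  have "Q ^ rank c \<ge> 1" using Q_ge_1 by simp
  moreover have "(\<Sum>c' \<in> {c' \<in> children (parent c). before c' c}.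
      Q ^ (rank c - rank c') * extent (subtree_size c')) \<ge> 0"
    using Q_ge_1 extent_nonneg by (intro sum_nonneg) simp
  ultimately show ?thesis unfolding offset_def by simp
qed

lemma coord_root: "coord r = 0"
proof -
  have no_proper_ancestor: "{u \<in> V. u \<noteq> r \<and> ancestor u r} = {}"
    using ancestor_root_eq by blast
  show ?thesis unfolding coord_def no_proper_ancestor by simp
qed

lemma coord_child: "v \<in> V \<Longrightarrow> v \<noteq> r \<Longrightarrow> coord v = coord (parent v) + offset v"
proof -
  assume v: "v \<in> V" "v \<noteq> r"
  have "{u \<in> V. u \<noteq> r \<and> ancestor u v} = insert v {u \<in> V. u \<noteq> r \<and> ancestor u (parent v)}"
    using ancestor_iff_parent[OF v] v by auto
  moreover have "v \<notin> {u \<in> V. u \<noteq> r \<and> ancestor u (parent v)}" using not_ancestor_parent[OF v] by simp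
  ultimately show ?thesis unfolding coord_def using finite_V by (simp add: add.commute)
qed

lemma walk_to_ancestor:
  assumes "v \<in> V" "ancestor w v"
  shows "\<exists>ws. walk V E ws \<and> hd ws = v \<and> last ws = w \<and> variation coord ws = coord v - coord w"
proof (rule parent_chain_walk[OF _ assms])
  show "coord (parent u) \<le> coord u" if "u \<in> V" "u \<noteq> r" for u
    using coord_child[OF that] offset_ge_1[of u] by simp
qed

lemma coord_ancestor_le: "v \<in> V \<Longrightarrow> ancestor w v \<Longrightarrow> coord w \<le> coord v"
  using walk_to_ancestor variation_nonneg by (metis diff_ge_0_iff_ge)

lemma coord_child_subtree:
  assumes "c \<in> children w" "v \<in> subtree c"
  shows "coord v \<ge> coord w + offset c"
  using coord_ancestor_le[of v c] coord_child[of c] assms childrenD unfolding subtree_def by auto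

lemma before_irrefl: "\<not> before a a"
  unfolding before_def by simp

lemma before_trans: "before a b \<Longrightarrow> before b c \<Longrightarrow> before a c"
  unfolding before_def by auto

lemma before_total: "a \<noteq> b \<Longrightarrow> before a b \<or> before b a"
  unfolding before_def by auto

lemma subtree_size_le_if_not_before: "\<not> before b a \<Longrightarrow> subtree_size a \<le> subtree_size b"
  unfolding before_def by auto

lemma rank_child: "c \<in> children w \<Longrightarrow> rank c = card {c' \<in> children w. before c' c}"
  unfolding rank_def using childrenD by simp

lemma offset_child: "c \<in> children w \<Longrightarrow>
  offset c = Q ^ rank c +
    (\<Sum>c' \<in> {c' \<in> children w. before c' c}. Q ^ (rank c - rank c') * extent (subtree_size c'))"
  unfolding offset_def using childrenD by simp

lemma rank_less:
  assumes c: "c \<in> children w" and c': "c' \<in> children w" and "before c' c"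
  shows "rank c' < rank c"
proof -
  have "{c'' \<in> children w. before c'' c'} \<subset> {c'' \<in> children w. before c'' c}"
    using assms before_trans before_irrefl by blast
  then show ?thesis
    using rank_child[OF c] rank_child[OF c'] finite_children
    by (metis (no_types, lifting) finite_subset mem_Collect_eq psubset_card_mono subsetI)
qed

lemma rank_less_card_children: "c \<in> children w \<Longrightarrow> rank c < card (children w)"
proof -
  assume c: "c \<in> children w"
  have "{c' \<in> children w. before c' c} \<subset> children w" using c before_irrefl by blast
  then show ?thesis using rank_child[OF c] finite_children psubset_card_mono by metis
qed

lemma growth_powr: "j + 1 \<le> D \<Longrightarrow> Q ^ j \<le> real (j + 1) powr (\<beta> - 1)"
proof -
  assume j: "j + 1 \<le> D"
  have "real (j + 1) powr \<beta> = real (j + 1) powr (\<beta> - 1) * real (j + 1)"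
    using powr_add[of "real (j + 1)" "\<beta> - 1" 1] by simp
  then show ?thesis using growth[OF j] by simp
qed

text \<open>Between c' and c lie at least \<^term>\<open>rank c - rank c'\<close> further siblings, none of them with a
  smaller subtree than c'.\<close>
lemma rank_gap_mult_size_le:
  assumes c: "c \<in> children w" and c': "c' \<in> children w" and p: "before c' c"
  shows "(rank c - rank c' + 1) * subtree_size c' \<le> (\<Sum>c''\<in>children w. subtree_size c'')"
proof -
  define A where "A = insert c {c'' \<in> children w. before c'' c}"
  define B where "B = {c'' \<in> children w. before c'' c'}"
  have "card A = rank c + 1"
    unfolding A_def using rank_child[OF c] finite_children before_irrefl by simp
  moreover have "card B = rank c'" unfolding B_def using rank_child[OF c'] by simp
  moreover have "finite B" unfolding B_def using finite_children by simp
  ultimately have "rank c - rank c' + 1 \<le> card (A - B)"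
    using diff_card_le_card_Diff[of B A] rank_less[OF c c' p] by simp
  moreover have "card (A - B) * subtree_size c' \<le> (\<Sum>t\<in>A - B. subtree_size t)"
  proof -
    have "\<And>t. t \<in> A - B \<Longrightarrow> subtree_size c' \<le> subtree_size t"
      unfolding B_def A_def using subtree_size_le_if_not_before c c' by auto
    then show ?thesis using sum_bounded_below[of "A - B" "subtree_size c'"] by (simp add: mult.commute)
  qed
  moreover have "(\<Sum>t\<in>A - B. subtree_size t) \<le> (\<Sum>c''\<in>children w. subtree_size c'')"
    by (rule sum_mono2) (use finite_children c A_def in auto)
  ultimately show ?thesis by (meson le_trans mult_le_mono1)
qed


lemma rank_bound:
  assumes "c \<in> children w"
  shows "rank c + 1 \<le> D" and "rank c + 1 \<le> subtree_size w"
  using rank_less_card_children[OF assms] card_children_le[OF child_in_V[OF assms]]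
    card_children_less_subtree_size[OF child_in_V[OF assms]] by linarith+

lemma Q_pow_rank_le:
  assumes c: "c \<in> children w"
  shows "Q ^ rank c \<le> real (subtree_size w) powr (\<beta> - 1)"
proof -
  have "Q ^ rank c \<le> real (rank c + 1) powr (\<beta> - 1)"
    using growth_powr rank_bound(1)[OF c] by blast
  also have "\<dots> \<le> real (subtree_size w) powr (\<beta> - 1)"
    using rank_bound(2)[OF c] beta_ge_1 by (intro powr_mono2) auto
  finally show ?thesis .
qed

lemma offset_term_le:
  assumes c: "c \<in> children w" and c': "c' \<in> children w" and p: "before c' c"
  shows "Q ^ (rank c - rank c') * extent (subtree_size c')
    \<le> real (subtree_size c') * real (subtree_size w) powr (\<beta> - 1)"
proof -
  define j where "j = rank c - rank c'"
  define s where "s = subtree_size c'"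
  have "j + 1 \<le> D" using rank_bound(1)[OF c] j_def by simp
  then have Qj: "Q ^ j \<le> real (j + 1) powr (\<beta> - 1)" by (rule growth_powr)
  have "s \<ge> 1" using subtree_size_pos childrenD[OF c'] s_def by blast
  have "(j + 1) * s \<le> subtree_size w"
    using rank_gap_mult_size_le[OF c c' p] subtree_size_eq[OF child_in_V[OF c]] j_def s_def by simp
  then have prod_le: "real ((j + 1) * s) \<le> real (subtree_size w)" by linarith
  have "Q ^ j * extent s = real s * (Q ^ j * real s powr (\<beta> - 1))"
    using extent_eq_mult[OF \<open>s \<ge> 1\<close>] by simp
  also have "\<dots> \<le> real s * (real (j + 1) powr (\<beta> - 1) * real s powr (\<beta> - 1))"
    using Qj by (intro mult_left_mono mult_right_mono) auto
  also have "\<dots> = real s * real ((j + 1) * s) powr (\<beta> - 1)"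
    by (subst of_nat_mult, subst powr_mult) auto
  also have "\<dots> \<le> real s * real (subtree_size w) powr (\<beta> - 1)"
    using prod_le beta_ge_1 by (intro mult_left_mono powr_mono2) auto
  finally show ?thesis unfolding j_def s_def .
qed

lemma offset_plus_extent_le:
  assumes c: "c \<in> children w"
  shows "offset c + extent (subtree_size c) \<le> extent (subtree_size w)"
proof -
  define N where "N = subtree_size w"
  define G where "G = real N powr (\<beta> - 1)"
  define P where "P = {c' \<in> children w. before c' c}"
  have fP: "finite P" and cP: "c \<notin> P" using finite_children before_irrefl unfolding P_def by auto
  have "extent (subtree_size c) \<le> real (subtree_size c) * G"
  proof -
    have "real (subtree_size c) powr (\<beta> - 1) \<le> G"
      unfolding G_def N_def using subtree_size_child_less[OF c] beta_ge_1
      by (intro powr_mono2) auto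
    then show ?thesis
      using extent_eq_mult subtree_size_pos childrenD[OF c] by (simp add: mult_left_mono)
  qed
  moreover have "(\<Sum>c'\<in>P. Q ^ (rank c - rank c') * extent (subtree_size c'))
      \<le> (\<Sum>c'\<in>P. real (subtree_size c') * G)"
    using offset_term_le[OF c] unfolding P_def G_def N_def by (intro sum_mono) auto
  ultimately have "offset c + extent (subtree_size c)
      \<le> G + (\<Sum>c'\<in>P. real (subtree_size c') * G) + real (subtree_size c) * G"
    using offset_child[OF c] Q_pow_rank_le[OF c] unfolding P_def G_def N_def by linarith
  also have "\<dots> = G * (1 + real (\<Sum>c'\<in>insert c P. subtree_size c'))"
    using fP cP by (simp add: sum_distrib_left algebra_simps of_nat_sum)
  also have "\<dots> \<le> G * real N"
  proof -
    have "(\<Sum>c'\<in>insert c P. subtree_size c') \<le> (\<Sum>c''\<in>children w. subtree_size c'')"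
      by (rule sum_mono2) (use finite_children c P_def in auto)
    then have "1 + real (\<Sum>c'\<in>insert c P. subtree_size c') \<le> real N"
      using subtree_size_eq[OF child_in_V[OF c]] unfolding N_def by linarith
    then show ?thesis unfolding G_def by (intro mult_left_mono) auto
  qed
  also have "\<dots> = extent N"
    using extent_eq_mult[of N] subtree_size_pos[OF child_in_V[OF c]]
    unfolding G_def N_def by (simp add: mult.commute)
  finally show ?thesis unfolding N_def .
qed

lemma sibling_offset_gap:
  assumes c1: "c1 \<in> children w" and c2: "c2 \<in> children w" and p: "before c1 c2"
  shows "Q * (offset c1 + extent (subtree_size c1)) \<le> offset c2"
proof -
  define P1 where "P1 = {c' \<in> children w. before c' c1}"
  define P2 where "P2 = {c' \<in> children w. before c' c2}"
  have lt: "rank c1 < rank c2" using rank_less[OF c2 c1 p] .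
  have Q_pow_mono: "Q ^ i \<le> Q ^ j" if "i \<le> j" for i j
    using that Q_ge_1 by (intro power_increasing) auto
  have "Q * offset c1 + Q * extent (subtree_size c1) = Q ^ Suc (rank c1) +
      (\<Sum>c'\<in>P1. Q ^ Suc (rank c1 - rank c') * extent (subtree_size c')) + Q * extent (subtree_size c1)"
    using offset_child[OF c1] unfolding P1_def by (simp add: distrib_left sum_distrib_left mult.assoc)
  also have "\<dots> \<le> Q ^ rank c2 + (\<Sum>c'\<in>P1. Q ^ (rank c2 - rank c') * extent (subtree_size c'))
      + Q ^ (rank c2 - rank c1) * extent (subtree_size c1)"
  proof -
    have "Q ^ Suc (rank c1 - rank c') \<le> Q ^ (rank c2 - rank c')" if "c' \<in> P1" for c'
    proof (rule Q_pow_mono)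
      show "Suc (rank c1 - rank c') \<le> rank c2 - rank c'"
        using rank_less[OF c1, of c'] that lt P1_def by auto
    qed
    then have "(\<Sum>c'\<in>P1. Q ^ Suc (rank c1 - rank c') * extent (subtree_size c'))
        \<le> (\<Sum>c'\<in>P1. Q ^ (rank c2 - rank c') * extent (subtree_size c'))"
      using extent_nonneg by (intro sum_mono mult_right_mono) auto
    moreover have "Q ^ 1 * extent (subtree_size c1) \<le> Q ^ (rank c2 - rank c1) * extent (subtree_size c1)"
      using lt Q_pow_mono[of 1 "rank c2 - rank c1"] extent_nonneg by (intro mult_right_mono) auto
    ultimately show ?thesis using Q_pow_mono[of "Suc (rank c1)" "rank c2"] lt by simp
  qed
  also have "\<dots> = Q ^ rank c2 + (\<Sum>c'\<in>insert c1 P1. Q ^ (rank c2 - rank c') * extent (subtree_size c'))"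
    using finite_children before_irrefl P1_def by simp
  also have "\<dots> \<le> Q ^ rank c2 + (\<Sum>c'\<in>P2. Q ^ (rank c2 - rank c') * extent (subtree_size c'))"
  proof -
    have "insert c1 P1 \<subseteq> P2" using P1_def P2_def c1 p before_trans by auto
    then show ?thesis using finite_children P2_def Q_ge_1 extent_nonneg
      by (intro add_left_mono sum_mono2) auto
  qed
  also have "\<dots> = offset c2" using offset_child[OF c2] P2_def by simp
  finally show ?thesis by (simp add: distrib_left)
qed

lemma coord_subtree_le:
  "w \<in> V \<Longrightarrow> v \<in> subtree w \<Longrightarrow> coord v \<le> coord w + extent (subtree_size w) - 1"
proof (induction "subtree_size w" arbitrary: w v rule: less_induct)
  case less
  show ?case
  proof (cases "v = w")
    case True
    have "extent (subtree_size w) \<ge> 1"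
      unfolding extent_def using subtree_size_pos[OF less.prems(1)] beta_ge_1
      by (intro ge_one_powr_ge_zero) auto
    then show ?thesis using True by simp
  next
    case False
    obtain c where c: "c \<in> children w" "v \<in> subtree c"
      using subtree_child_cases[OF less.prems(2) False] by blast
    have "coord v \<le> coord c + extent (subtree_size c) - 1"
      using less.hyps[OF subtree_size_child_less[OF c(1)]] childrenD[OF c(1)] c(2) by blast
    also have "coord c = coord w + offset c" using coord_child childrenD[OF c(1)] by auto
    finally show ?thesis using offset_plus_extent_le[OF c(1)] by simp
  qed
qed


lemma walk_across_siblings:
  assumes eps: "\<epsilon> > 0" "\<epsilon> * Q \<ge> 2 + \<epsilon>"
    and c1: "c1 \<in> children w" and c2: "c2 \<in> children w" and p: "before c1 c2"
    and v: "v \<in> subtree c1" and v': "v' \<in> subtree c2"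
  shows "1 \<le> coord v' - coord v \<and> short_walk V E \<epsilon> coord v v'"
proof -
  have "v \<in> subtree w" "v' \<in> subtree w" using v v' subtree_child_subset c1 c2 by auto
  then obtain ws1 ws2 where ws1: "walk V E ws1" "hd ws1 = v" "last ws1 = w"
      "variation coord ws1 = coord v - coord w"
    and ws2: "walk V E ws2" "hd ws2 = v'" "last ws2 = w"
      "variation coord ws2 = coord v' - coord w"
    using walk_to_ancestor unfolding subtree_def by (metis (no_types, lifting) mem_Collect_eq)
  define ws where "ws = butlast ws1 @ rev ws2"
  have ws: "walk V E ws" "hd ws = v" "last ws = v'"
    "variation coord ws = (coord v - coord w) + (coord v' - coord w)"
    using walk_join[OF ws1(1) ws2(1)] variation_join[of ws1 ws2 coord] ws1 ws2 walk_not_Nil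
    unfolding ws_def by auto
  define A where "A = coord v - coord w"
  define B where "B = coord v' - coord w"
  define o1 where "o1 = offset c1 + extent (subtree_size c1)"
  have "coord c1 = coord w + offset c1" using coord_child childrenD[OF c1] by auto
  then have A_le: "A \<le> o1 - 1"
    using coord_subtree_le[of c1 v] childrenD[OF c1] v unfolding A_def o1_def by simp
  have o1_nonneg: "o1 \<ge> 0" using offset_ge_1[of c1] extent_nonneg unfolding o1_def by simp
  have B_ge: "B \<ge> Q * o1"
    using coord_child_subtree[OF c2 v'] sibling_offset_gap[OF c1 c2 p] unfolding B_def o1_def by simp
  have "\<epsilon> * B \<ge> (2 + \<epsilon>) * (A + 1)"
  proof -
    have "\<epsilon> * B \<ge> \<epsilon> * Q * o1" using B_ge eps by (simp add: mult.assoc)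
    moreover have "\<epsilon> * Q * o1 \<ge> (2 + \<epsilon>) * o1" using eps o1_nonneg by (intro mult_right_mono) auto
    moreover have "(2 + \<epsilon>) * o1 \<ge> (2 + \<epsilon>) * (A + 1)" using A_le eps by (intro mult_left_mono) auto
    ultimately show ?thesis by linarith
  qed
  moreover have "B - A \<ge> 1"
    using B_ge A_le o1_nonneg Q_ge_1 mult_right_mono[of 1 Q o1] by linarith
  ultimately have "variation coord ws \<le> (1 + \<epsilon>) * \<bar>coord v - coord v'\<bar> - 2"
    "1 \<le> coord v' - coord v"
    using ws(4) eps unfolding A_def B_def by (auto simp: algebra_simps)
  then show ?thesis using ws unfolding short_walk_def by auto
qed

lemma short_walk_to_ancestor:
  assumes "u \<in> subtree w" "u \<noteq> w"
  shows "1 \<le> \<bar>coord u - coord w\<bar> \<and> short_walk V E \<epsilon> coord u w"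
proof -
  obtain c where c: "c \<in> children w" "u \<in> subtree c" using subtree_child_cases[OF assms] by blast
  then have "1 \<le> coord u - coord w" using coord_child_subtree offset_ge_1[of c] by fastforce
  moreover obtain ws where "walk V E ws" "hd ws = u" "last ws = w"
    "variation coord ws = coord u - coord w"
    using walk_to_ancestor assms(1) unfolding subtree_def by blast
  ultimately show ?thesis using short_walk_monotone[of V E ws u w coord] by auto
qed

lemma short_walks_in_subtree:
  assumes eps: "\<epsilon> > 0" "\<epsilon> * Q \<ge> 2 + \<epsilon>"
  shows "w \<in> V \<Longrightarrow> v \<in> subtree w \<Longrightarrow> v' \<in> subtree w \<Longrightarrow> v \<noteq> v' \<Longrightarrow>
    1 \<le> \<bar>coord v - coord v'\<bar> \<and> short_walk V E \<epsilon> coord v v'"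
proof (induction "subtree_size w" arbitrary: w v v' rule: less_induct)
  case less
  consider (top) "v = w" | (top') "v' = w" | (below) c1 c2 where "c1 \<in> children w"
    "v \<in> subtree c1" "c2 \<in> children w" "v' \<in> subtree c2"
    using subtree_child_cases less.prems by metis
  then show ?case
  proof cases
    case top
    then show ?thesis
      using short_walk_to_ancestor[of v' w] less.prems short_walk_sym abs_minus_commute by metis
  next
    case top'
    then show ?thesis using short_walk_to_ancestor[of v w] less.prems by blast
  next
    case (below c1 c2)
    consider (same) "c1 = c2" | (left) "before c1 c2" | (right) "before c2 c1"
      using before_total by blast
    then show ?thesis
    proof cases
      case same
      then show ?thesis
        using below less.hyps[OF subtree_size_child_less[OF below(1)]] childrenD less.prems(4)
        by blast
    next
      case left
      then show ?thesis using walk_across_siblings[OF eps below(1,3) _ below(2,4)] by auto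
    next
      case right
      then show ?thesis using walk_across_siblings[OF eps below(3,1) _ below(4,2)] short_walk_sym
        by (metis abs_minus_commute abs_of_nonneg order.trans zero_le_one)
    qed
  qed
qed

lemma coord_range: "v \<in> V \<Longrightarrow> 0 \<le> coord v \<and> coord v \<le> extent (card V) - 1"
  using coord_ancestor_le[OF _ root_ancestor] coord_subtree_le[OF root_in_V] coord_root
  unfolding subtree_root subtree_size_def by simp

lemma coord_short_walks:
  assumes "\<epsilon> > 0" "\<epsilon> * Q \<ge> 2 + \<epsilon>" "u \<in> V" "v \<in> V" "u \<noteq> v"
  shows "1 \<le> \<bar>coord u - coord v\<bar> \<and> short_walk V E \<epsilon> coord u v"
  using short_walks_in_subtree[OF assms(1,2) root_in_V] assms(3-5) subtree_root by blast

end

section \<open>The growth condition\<close>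

lemma le_powr_of_ln_le:
  fixes x y b :: real
  assumes "x > 0" "y > 0" "ln x \<le> b * ln y"
  shows "x \<le> y powr b"
proof -
  have "x = exp (ln x)" using assms(1) by simp
  also have "\<dots> \<le> exp (b * ln y)" using assms(3) by simp
  finally show ?thesis using assms(2) by (simp add: powr_def)
qed

lemma ln_ge_1:
  fixes x :: real
  assumes "x \<ge> 3"
  shows "ln x \<ge> 1"
proof -
  have "ln 3 \<le> ln x" using assms by (subst ln_le_cancel_iff) auto
  then show ?thesis using ln3_gt_1 by linarith
qed

lemma ln_div_ln_one_plus_inverse_ge:
  fixes q :: real and D :: nat
  assumes "D \<ge> 1" "q \<ge> 1"
  shows "real D * ln q \<le> ln q / ln (1 + 1 / real D)"
proof -
  have "0 < ln (1 + 1 / real D)" using assms(1) by (intro ln_gt_zero) auto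
  moreover have "ln (1 + 1 / real D) \<le> 1 / real D"
    using ln_add_one_self_le_self[of "1 / real D"] by simp
  ultimately have "ln q / (1 / real D) \<le> ln q / ln (1 + 1 / real D)"
    using assms by (intro divide_left_mono) auto
  then show ?thesis by (simp add: mult.commute)
qed

lemma exponent_ge_1:
  fixes q :: real and D :: nat
  assumes "D \<ge> 1" "q \<ge> 3"
  shows "ln q / ln (1 + 1 / real D) \<ge> 1"
proof -
  have "1 * 1 \<le> real D * ln q" using assms ln_ge_1 by (intro mult_mono) auto
  then show ?thesis using ln_div_ln_one_plus_inverse_ge[of D q] assms by linarith
qed

text \<open>For j = 1 and small q the bound \<beta> \<ge> D ln q is too weak; there D \<ge> 2 gives
  \<beta> \<ge> ln q / ln (3/2) instead.\<close>
lemma growth_rank_one: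
  fixes q :: real and D :: nat
  assumes q: "q \<ge> 3" and D: "D \<ge> 2"
  shows "ln (2 * (q - 1)) \<le> ln q / ln (1 + 1 / real D) * ln 2"
proof -
  have lq: "ln q \<ge> 1" using ln_ge_1 q .
  have "ln (2 * (q - 1)) \<le> 3 / 2 * ln q"
  proof -
    have "q ^ 3 - (2 * (q - 1)) ^ 2 = q * (q - 2) ^ 2 + 4 * (q - 1)"
      by (simp add: power2_eq_square power3_eq_cube algebra_simps)
    moreover have "q * (q - 2) ^ 2 + 4 * (q - 1) \<ge> 0" using q by simp
    ultimately have "(2 * (q - 1)) ^ 2 \<le> q ^ 3" by linarith
    then have "ln ((2 * (q - 1)) ^ 2) \<le> ln (q ^ 3)" using q by (subst ln_le_cancel_iff) auto
    then have "2 * ln (2 * (q - 1)) \<le> 3 * ln q" using q by (simp add: ln_realpow)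
    then show ?thesis by simp
  qed
  also have "\<dots> \<le> ln q / ln (3 / 2) * ln 2"
  proof -
    have "ln ((3 / 2) ^ 3) \<le> ln ((2::real) ^ 2)" by (subst ln_le_cancel_iff) (auto simp: power3_eq_cube)
    then have "3 * ln (3 / 2) \<le> 2 * ln (2::real)"
      using ln_realpow[of "3 / 2" 3] ln_realpow[of 2 2] by simp
    then show ?thesis using lq by (simp add: field_simps)
  qed
  also have "\<dots> \<le> ln q / ln (1 + 1 / real D) * ln 2"
  proof -
    have "1 + 1 / real D \<le> 3 / 2" using D by (simp add: field_simps)
    moreover have "0 < 1 + 1 / real D" by (simp add: add_pos_nonneg)
    ultimately have "ln (1 + 1 / real D) \<le> ln (3 / 2)" by (subst ln_le_cancel_iff) auto
    moreover have "0 < ln (1 + 1 / real D)" using D by (intro ln_gt_zero) auto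
    ultimately show ?thesis using lq by (intro mult_right_mono divide_left_mono) auto
  qed
  finally show ?thesis .
qed

lemma growth_condition:
  fixes q :: real and D j :: nat
  assumes q: "q \<ge> 3" and j: "j + 1 \<le> D"
  shows "(q - 1) ^ j * real (j + 1) \<le> real (j + 1) powr (ln q / ln (1 + 1 / real D))"
proof (rule le_powr_of_ln_le)
  define b where "b = ln q / ln (1 + 1 / real D)"
  define L where "L = ln (real (j + 1))"
  have lq: "ln q \<ge> 1" using ln_ge_1 q .
  show "(q - 1) ^ j * real (j + 1) > 0" using q by simp
  have "real j * ln (q - 1) + L \<le> b * L"
  proof (cases "j \<le> 1")
    case True
    then consider "j = 0" | "j = 1" by linarith
    then show ?thesis
    proof cases
      case 2
      have "ln (2 * (q - 1)) = ln 2 + ln (q - 1)" using q ln_mult[of 2 "q - 1"] by simp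
      then show ?thesis
        using growth_rank_one[OF q, of D] j 2 unfolding b_def L_def by simp
    qed (simp add: L_def)
  next
    case False
    have "ln 3 \<le> L" unfolding L_def using False by (subst ln_le_cancel_iff) auto
    then have L: "L \<ge> 1" using ln3_gt_1 by simp
    have "real (j + 1) * ln q \<le> real D * ln q" using j lq by (intro mult_right_mono) auto
    also have "\<dots> \<le> b" using ln_div_ln_one_plus_inverse_ge[of D q] j q unfolding b_def by simp
    finally have "real (j + 1) * ln q \<le> b" .
    then have "real (j + 1) * ln q * L \<le> b * L" using L by (intro mult_right_mono) auto
    moreover have "real j * ln (q - 1) \<le> real j * (ln q * L)"
    proof (intro mult_left_mono)
      have "ln (q - 1) \<le> ln q" using q by simp
      also have "\<dots> \<le> ln q * L" using lq L by simp
      finally show "ln (q - 1) \<le> ln q * L" .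
    qed simp
    moreover have "L \<le> ln q * L" using lq L by simp
    ultimately show ?thesis by (simp add: algebra_simps)
  qed
  then show "ln ((q - 1) ^ j * real (j + 1)) \<le> b * ln (real (j + 1))"
    using q unfolding L_def by (simp add: ln_mult ln_realpow)
qed simp

section \<open>Lifting a line layout to a parabola\<close>

lemma parabola_not_collinear:
  fixes x1 x2 x3 \<delta> :: real
  assumes d: "\<delta> \<noteq> 0" and ne: "x1 \<noteq> x2" "x1 \<noteq> x3" "x2 \<noteq> x3"
  shows "\<not> collinear {(x1, \<delta> * x1^2), (x2, \<delta> * x2^2), (x3, \<delta> * x3^2)}"
proof
  assume "collinear {(x1, \<delta> * x1^2), (x2, \<delta> * x2^2), (x3, \<delta> * x3^2)}"
  then obtain u v :: "real \<times> real"
    where uv: "\<forall>p \<in> {(x1, \<delta> * x1^2), (x2, \<delta> * x2^2), (x3, \<delta> * x3^2)}. \<exists>c. p = u + c *\<^sub>R v"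
    unfolding collinear_alt by blast
  obtain c1 c2 c3 where c1: "(x1, \<delta> * x1^2) = u + c1 *\<^sub>R v"
    and c2: "(x2, \<delta> * x2^2) = u + c2 *\<^sub>R v" and c3: "(x3, \<delta> * x3^2) = u + c3 *\<^sub>R v"
    using uv by auto
  have e1: "x1 - x2 = (c1 - c2) * fst v" "\<delta> * x1^2 - \<delta> * x2^2 = (c1 - c2) * snd v"
    using arg_cong[OF c1, of fst] arg_cong[OF c2, of fst] arg_cong[OF c1, of snd] arg_cong[OF c2, of snd]
    by (auto simp: algebra_simps)
  have e2: "x1 - x3 = (c1 - c3) * fst v" "\<delta> * x1^2 - \<delta> * x3^2 = (c1 - c3) * snd v"
    using arg_cong[OF c1, of fst] arg_cong[OF c3, of fst] arg_cong[OF c1, of snd] arg_cong[OF c3, of snd]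
    by (auto simp: algebra_simps)
  have "(x1 - x2) * (\<delta> * x1^2 - \<delta> * x3^2) = (x1 - x3) * (\<delta> * x1^2 - \<delta> * x2^2)"
    unfolding e1 e2 by (simp add: algebra_simps)
  then have "\<delta> * ((x1 - x2) * (x1 - x3) * (x3 - x2)) = 0"
    by (simp add: power2_eq_square algebra_simps)
  then show False using d ne by simp
qed

lemma dist_parabola:
  fixes a b \<delta> M :: real
  assumes "0 \<le> a" "a \<le> M" "0 \<le> b" "b \<le> M" "\<delta> \<ge> 0"
  shows "\<bar>a - b\<bar> \<le> dist (a, \<delta> * a^2) (b, \<delta> * b^2)"
    and "dist (a, \<delta> * a^2) (b, \<delta> * b^2) \<le> (1 + 2 * \<delta> * M) * \<bar>a - b\<bar>"
proof -
  have dd: "dist (a, \<delta> * a^2) (b, \<delta> * b^2) = sqrt ((a - b)^2 + (\<delta> * a^2 - \<delta> * b^2)^2)"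
    by (simp add: dist_Pair_Pair dist_real_def)
  show "\<bar>a - b\<bar> \<le> dist (a, \<delta> * a^2) (b, \<delta> * b^2)"
    unfolding dd using real_sqrt_sum_squares_ge1[of "\<bar>a - b\<bar>"] by simp
  have "\<delta> * a^2 - \<delta> * b^2 = (\<delta> * (a + b)) * (a - b)" by (simp add: power2_eq_square algebra_simps)
  then have "\<bar>\<delta> * a^2 - \<delta> * b^2\<bar> = \<delta> * \<bar>a + b\<bar> * \<bar>a - b\<bar>"
    using assms by (simp add: abs_mult)
  also have "\<dots> \<le> \<delta> * (2 * M) * \<bar>a - b\<bar>"
    using assms by (intro mult_right_mono mult_left_mono) auto
  finally show "dist (a, \<delta> * a^2) (b, \<delta> * b^2) \<le> (1 + 2 * \<delta> * M) * \<bar>a - b\<bar>"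
    unfolding dd using sqrt_sum_squares_le_sum_abs[of "a - b" "\<delta> * a^2 - \<delta> * b^2"]
    by (simp add: algebra_simps)
qed

lemma Max_minus_Min_image_le:
  assumes "finite A" "A \<noteq> {}" "\<And>a. a \<in> A \<Longrightarrow> lo \<le> f a \<and> f a \<le> (hi :: real)"
  shows "Max (f ` A) - Min (f ` A) \<le> hi - lo"
proof -
  have "Max (f ` A) \<le> hi" "lo \<le> Min (f ` A)" using assms by (simp_all add: Max_le_iff Min_ge_iff)
  then show ?thesis by simp
qed

lemma Max_div_Min_le:
  assumes "finite S" "S \<noteq> {}" "\<And>s. s \<in> S \<Longrightarrow> 1 \<le> s \<and> s \<le> (K :: real)"
  shows "Max S / Min S \<le> K"
proof -
  have "Max S \<in> S" "Min S \<in> S" using assms(1,2) by simp_all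
  then have "Max S \<ge> 0" "Min S \<ge> 1" "Max S \<le> K" using assms(3) by force+
  then have "Max S / Min S \<le> Max S" by (simp add: divide_le_eq mult_le_cancel_left1)
  then show ?thesis using \<open>Max S \<le> K\<close> by linarith
qed

text \<open>The parabola stretches the line by at most the factor \<^term>\<open>1 + stretch\<close>; for walks
  that are not monotone this is absorbed by the additive slack in \<^const>\<open>short_walk\<close>.\<close>
locale parabola_lift =
  fixes V :: "'a set" and E :: "'a set set" and \<epsilon> :: real and x :: "'a \<Rightarrow> real" and M :: real
  assumes simple: "simple_graph V E" and edges_ne: "E \<noteq> {}"
    and eps_pos: "\<epsilon> > 0"
    and x_range: "\<And>v. v \<in> V \<Longrightarrow> 0 \<le> x v \<and> x v \<le> M"
    and x_separated: "\<And>u v. u \<in> V \<Longrightarrow> v \<in> V \<Longrightarrow> u \<noteq> v \<Longrightarrow> 1 \<le> \<bar>x u - x v\<bar>"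
    and x_short_walk: "\<And>u v. u \<in> V \<Longrightarrow> v \<in> V \<Longrightarrow> u \<noteq> v \<Longrightarrow> short_walk V E \<epsilon> x u v"
begin

lemma M_ge_1: "M \<ge> 1"
proof -
  obtain e where "e \<in> E" using edges_ne by blast
  then obtain a b where "a \<in> V" "b \<in> V" "a \<noteq> b" using simple unfolding simple_graph_def by blast
  then show ?thesis using x_separated[of a b] x_range[of a] x_range[of b] by linarith
qed

definition stretch :: real where
  "stretch = \<epsilon> / ((1 + \<epsilon>)^2 * M)"

definition drawing :: "'a \<Rightarrow> point" where
  "drawing v = (x v, stretch / (2 * M) * (x v)^2)"

lemma stretch_pos: "stretch > 0"
  unfolding stretch_def using eps_pos M_ge_1 by simp

lemma stretch_le_eps: "stretch \<le> \<epsilon>"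
proof -
  have "(1 + \<epsilon>)^2 * M \<ge> 1 * 1" using eps_pos M_ge_1 by (intro mult_mono one_le_power) auto
  then show ?thesis unfolding stretch_def using eps_pos by (simp add: divide_le_eq mult_le_cancel_left1)
qed

lemma stretch_mult_le_1: "stretch * ((1 + \<epsilon>) * M) \<le> 1"
proof -
  have "(1 + \<epsilon>) * M > 0" using eps_pos M_ge_1 by simp
  then have "stretch * ((1 + \<epsilon>) * M) = \<epsilon> / (1 + \<epsilon>)"
    unfolding stretch_def using M_ge_1 by (simp add: power2_eq_square mult.assoc)
  then show ?thesis using eps_pos by simp
qed

lemma stretch_le_1: "stretch \<le> 1"
proof -
  have "1 * 1 \<le> (1 + \<epsilon>) * M" using eps_pos M_ge_1 by (intro mult_mono) auto
  then have "stretch * 1 \<le> stretch * ((1 + \<epsilon>) * M)"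
    using stretch_pos by (intro mult_left_mono) auto
  then show ?thesis using stretch_mult_le_1 by simp
qed

lemma dist_drawing:
  assumes "a \<in> V" "b \<in> V"
  shows "\<bar>x a - x b\<bar> \<le> dist (drawing a) (drawing b)"
    and "dist (drawing a) (drawing b) \<le> (1 + stretch) * \<bar>x a - x b\<bar>"
  using dist_parabola[of "x a" M "x b" "stretch / (2 * M)"] x_range[OF assms(1)] x_range[OF assms(2)]
    stretch_pos M_ge_1 unfolding drawing_def by auto

lemma drawing_separated: "u \<in> V \<Longrightarrow> v \<in> V \<Longrightarrow> u \<noteq> v \<Longrightarrow> 1 \<le> dist (drawing u) (drawing v)"
  using x_separated dist_drawing(1) by (meson order.trans)

lemma drawing_no_three_collinear: "no_three_collinear V drawing"
  unfolding no_three_collinear_def drawing_def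
proof (intro ballI impI)
  fix u v w assume "u \<in> V" "v \<in> V" "w \<in> V" "u \<noteq> v" "u \<noteq> w" "v \<noteq> w"
  then have "x u \<noteq> x v" "x u \<noteq> x w" "x v \<noteq> x w" using x_separated by force+
  moreover have "stretch / (2 * M) \<noteq> 0" using stretch_pos M_ge_1 by simp
  ultimately show "\<not> collinear {(x u, stretch / (2 * M) * (x u)\<^sup>2), (x v, stretch / (2 * M) * (x v)\<^sup>2),
      (x w, stretch / (2 * M) * (x w)\<^sup>2)}"
    using parabola_not_collinear by blast
qed

lemma drawing_proper: "proper_drawing V E drawing"
  unfolding proper_drawing_def
proof (intro conjI ballI impI)
  show "inj_on drawing V"
    using drawing_separated by (metis dist_self inj_onI not_one_le_zero)
next
  fix u v w assume uvw: "u \<in> V" "v \<in> V" "w \<in> V" and "adj E u v" "w \<noteq> u" "w \<noteq> v"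
  moreover have "u \<noteq> v" using simple_graph_edgeD[OF simple] \<open>adj E u v\<close> unfolding adj_def by blast
  ultimately have "\<not> collinear {drawing u, drawing v, drawing w}"
    using drawing_no_three_collinear unfolding no_three_collinear_def by auto
  moreover have "collinear {drawing u, drawing v, drawing w}"
    if "drawing w \<in> closed_segment (drawing u) (drawing v)"
    by (rule collinear_subset[OF collinear_closed_segment[of "drawing u" "drawing v"]]) (use that in auto)
  ultimately show "drawing w \<notin> closed_segment (drawing u) (drawing v)" by blast
qed

lemma stretched_short_walk_le:
  assumes "variation x ws \<le> \<Delta> \<or> variation x ws \<le> (1 + \<epsilon>) * \<Delta> - 2" "0 \<le> \<Delta>" "\<Delta> \<le> M"
  shows "(1 + stretch) * variation x ws \<le> (1 + \<epsilon>) * \<Delta>"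
  using assms(1)
proof
  assume "variation x ws \<le> \<Delta>"
  then have "(1 + stretch) * variation x ws \<le> (1 + stretch) * \<Delta>"
    using stretch_pos by (intro mult_left_mono) auto
  also have "\<dots> \<le> (1 + \<epsilon>) * \<Delta>"
    using stretch_le_eps assms(2) by (intro mult_right_mono) auto
  finally show ?thesis .
next
  assume var: "variation x ws \<le> (1 + \<epsilon>) * \<Delta> - 2"
  have "(1 + \<epsilon>) * \<Delta> \<le> (1 + \<epsilon>) * M" using assms(3) eps_pos by (intro mult_left_mono) auto
  then have "stretch * variation x ws \<le> stretch * ((1 + \<epsilon>) * M)"
    using var stretch_pos by (intro mult_left_mono) auto
  then have "stretch * variation x ws \<le> 1" using stretch_mult_le_1 by linarith
  then show ?thesis using var by (simp add: algebra_simps)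
qed

lemma drawing_spanning_ratio: "spanning_ratio V E drawing \<le> 1 + \<epsilon>"
  unfolding spanning_ratio_def
proof (rule cSup_least)
  obtain e where "e \<in> E" using edges_ne by blast
  then obtain a b where "{a, b} \<in> E" using simple unfolding simple_graph_def by auto
  then have "a \<in> V \<and> b \<in> V \<and> a \<noteq> b" using simple_graph_edgeD[OF simple] by blast
  then have "graph_dist V E drawing a b / dist (drawing a) (drawing b) \<in>
      {graph_dist V E drawing u v / dist (drawing u) (drawing v) |u v. u \<in> V \<and> v \<in> V \<and> u \<noteq> v}"
    by blast
  then show "{graph_dist V E drawing u v / dist (drawing u) (drawing v) |u v.
      u \<in> V \<and> v \<in> V \<and> u \<noteq> v} \<noteq> {}"
    by blast
next
  fix t assume "t \<in> {graph_dist V E drawing u v / dist (drawing u) (drawing v) |u v.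
      u \<in> V \<and> v \<in> V \<and> u \<noteq> v}"
  then obtain u v where t: "t = graph_dist V E drawing u v / dist (drawing u) (drawing v)"
    and uv: "u \<in> V" "v \<in> V" "u \<noteq> v"
    by blast
  obtain ws where ws: "walk V E ws" "hd ws = u" "last ws = v"
    and short: "variation x ws \<le> \<bar>x u - x v\<bar> \<or> variation x ws \<le> (1 + \<epsilon>) * \<bar>x u - x v\<bar> - 2"
    using x_short_walk[OF uv] unfolding short_walk_def by auto
  have "\<bar>x u - x v\<bar> \<le> M" using x_range[OF uv(1)] x_range[OF uv(2)] by linarith
  have "graph_dist V E drawing u v \<le> path_length drawing ws"
    using graph_dist_le_path_length[OF ws] .
  also have "\<dots> \<le> (1 + stretch) * variation x ws"
  proof (rule path_length_le_variation)
    show "set ws \<subseteq> V" using ws(1) unfolding walk_iff by simp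
  qed (rule dist_drawing(2))
  also have "\<dots> \<le> (1 + \<epsilon>) * \<bar>x u - x v\<bar>"
    using stretched_short_walk_le[OF short] \<open>\<bar>x u - x v\<bar> \<le> M\<close> by simp
  also have "\<dots> \<le> (1 + \<epsilon>) * dist (drawing u) (drawing v)"
    using dist_drawing(1)[OF uv(1,2)] eps_pos by (intro mult_left_mono) auto
  finally have "graph_dist V E drawing u v \<le> (1 + \<epsilon>) * dist (drawing u) (drawing v)" .
  moreover have "dist (drawing u) (drawing v) > 0" using drawing_separated[OF uv] by linarith
  ultimately show "t \<le> 1 + \<epsilon>" unfolding t by (simp add: divide_le_eq)
qed

lemma finite_V: "finite V"
  using simple unfolding simple_graph_def by simp

lemma V_ne: "V \<noteq> {}"
proof -
  obtain e where "e \<in> E" using edges_ne by blast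
  then show ?thesis using simple unfolding simple_graph_def by blast
qed

lemma drawing_width_le: "drawing_width V drawing \<le> M"
  unfolding drawing_width_def drawing_def
  using Max_minus_Min_image_le[OF finite_V V_ne, of 0 x M] x_range by (simp add: image_image)

lemma drawing_height_le: "drawing_height V drawing \<le> M"
proof -
  have "0 \<le> stretch / (2 * M) * (x v)^2 \<and> stretch / (2 * M) * (x v)^2 \<le> M" if "v \<in> V" for v
  proof -
    have "stretch / (2 * M) * (x v)^2 \<le> stretch / (2 * M) * M^2"
      using x_range[OF that] stretch_pos M_ge_1 by (intro mult_left_mono power_mono) auto
    also have "\<dots> \<le> M"
      using stretch_le_1 M_ge_1 by (simp add: power2_eq_square)
    finally show ?thesis using stretch_pos M_ge_1 by simp
  qed
  then show ?thesis
    unfolding drawing_height_def drawing_def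
    using Max_minus_Min_image_le[OF finite_V V_ne, of 0 "\<lambda>v. stretch / (2 * M) * (x v)^2" M]
    by simp
qed

lemma drawing_edge_length_ratio_le: "edge_length_ratio E drawing \<le> 2 * M"
proof -
  define S where "S = {dist (drawing u) (drawing v) |u v. {u, v} \<in> E}"
  have "S \<subseteq> (\<lambda>(u, v). dist (drawing u) (drawing v)) ` (V \<times> V)"
  proof
    fix s assume "s \<in> S"
    then obtain u v where "s = dist (drawing u) (drawing v)" "{u, v} \<in> E" unfolding S_def by blast
    then show "s \<in> (\<lambda>(u, v). dist (drawing u) (drawing v)) ` (V \<times> V)"
      using simple_graph_edgeD[OF simple] by (intro image_eqI[of _ _ "(u, v)"]) auto
  qed
  then have "finite S" using finite_V finite_subset by blast
  moreover have "S \<noteq> {}"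
  proof -
    obtain e where "e \<in> E" using edges_ne by blast
    then obtain a b where "{a, b} \<in> E" using simple unfolding simple_graph_def by auto
    then show ?thesis unfolding S_def by blast
  qed
  moreover have "1 \<le> s \<and> s \<le> 2 * M" if sS: "s \<in> S" for s
  proof -
    obtain u v where s: "s = dist (drawing u) (drawing v)" and "{u, v} \<in> E"
      using sS unfolding S_def by blast
    then have uv: "u \<in> V" "v \<in> V" "u \<noteq> v" using simple_graph_edgeD[OF simple] by auto
    have "\<bar>x u - x v\<bar> \<le> M" using x_range[OF uv(1)] x_range[OF uv(2)] by linarith
    then have "(1 + stretch) * \<bar>x u - x v\<bar> \<le> 2 * M"
      using stretch_le_1 by (intro mult_mono) auto
    then show ?thesis using dist_drawing(2)[OF uv(1,2)] drawing_separated[OF uv] s by simp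
  qed
  ultimately show ?thesis
    unfolding edge_length_ratio_def S_def[symmetric] by (rule Max_div_Min_le)
qed

end

section \<open>Drawing trees\<close>

lemma ceiling_parameter_bounds:
  fixes \<epsilon> :: real
  assumes "\<epsilon> > 0"
  shows "2 + real_of_int \<lceil>2 / \<epsilon>\<rceil> \<ge> 3" and "\<epsilon> * (1 + real_of_int \<lceil>2 / \<epsilon>\<rceil>) \<ge> 2 + \<epsilon>"
proof -
  show "2 + real_of_int \<lceil>2 / \<epsilon>\<rceil> \<ge> 3" using assms by simp
  have "\<epsilon> * (2 / \<epsilon>) \<le> \<epsilon> * real_of_int \<lceil>2 / \<epsilon>\<rceil>"
    using assms le_of_int_ceiling by (intro mult_left_mono) auto
  then show "\<epsilon> * (1 + real_of_int \<lceil>2 / \<epsilon>\<rceil>) \<ge> 2 + \<epsilon>" using assms by (simp add: algebra_simps)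
qed

lemma tree_line_layout:
  fixes V :: "'a::linorder set" and \<epsilon> :: real
  assumes eps: "\<epsilon> > 0" and tree: "is_tree V E" and d2: "max_degree V E \<ge> 2"
  defines "d \<equiv> real (max_degree V E)"
  defines "\<beta> \<equiv> log 2 (2 + real_of_int \<lceil>2 / \<epsilon>\<rceil>) / log 2 (d / (d - 1))"
  obtains x where "\<And>v. v \<in> V \<Longrightarrow> 0 \<le> x v \<and> x v \<le> real (card V) powr \<beta>"
    and "\<And>u v. u \<in> V \<Longrightarrow> v \<in> V \<Longrightarrow> u \<noteq> v \<Longrightarrow> 1 \<le> \<bar>x u - x v\<bar> \<and> short_walk V E \<epsilon> x u v"
proof -
  have sg: "simple_graph V E" and conn: "connected_graph V E" and "finite V"
    using tree unfolding is_tree_def simple_graph_def by auto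
  obtain r where r: "r \<in> V" "degree E r \<le> 1" using tree_has_leaf[OF tree] by blast
  then obtain parent depth where rt: "rooted_tree V E r parent depth"
    using connected_graph_rooting[OF conn \<open>finite V\<close>] by blast
  define D where "D = max_degree V E - 1"
  define q where "q = 2 + real_of_int \<lceil>2 / \<epsilon>\<rceil>"
  have D1: "D \<ge> 1" using d2 unfolding D_def by simp
  have q3: "q \<ge> 3" and eps_q: "\<epsilon> * (q - 1) \<ge> 2 + \<epsilon>"
    using ceiling_parameter_bounds[OF eps] unfolding q_def by simp_all
  have "d / (d - 1) = 1 + 1 / real D"
    using D1 d2 unfolding d_def D_def by (simp add: of_nat_diff field_simps)
  then have beta_eq: "\<beta> = ln q / ln (1 + 1 / real D)"
    unfolding \<beta>_def q_def by (simp add: log_def)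
  have beta1: "\<beta> \<ge> 1" using exponent_ge_1[OF D1 q3] unfolding beta_eq .
  have "card (rooted_tree.children V r parent u) \<le> D" if "u \<in> V" for u
    using rooted_tree.card_children_le_degree[OF rt sg that] degree_le_max_degree[OF sg that] r d2
    unfolding D_def by (cases "u = r") auto
  then interpret tree_layout V E r parent depth D "q - 1" \<beta>
    using rt q3 beta1 growth_condition[OF q3] unfolding beta_eq
    by (intro tree_layout.intro tree_layout_axioms.intro) auto
  show ?thesis
  proof (rule that)
    show "0 \<le> coord v \<and> coord v \<le> real (card V) powr \<beta>" if "v \<in> V" for v
      using coord_range[OF that] unfolding extent_def by simp
    show "1 \<le> \<bar>coord u - coord v\<bar> \<and> short_walk V E \<epsilon> coord u v"
      if "u \<in> V" "v \<in> V" "u \<noteq> v" for u v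
      using coord_short_walks[OF eps eps_q that] .
  qed
qed

lemma max_degree_pos_edges_ne: "V \<noteq> {} \<Longrightarrow> 0 < max_degree V E \<Longrightarrow> E \<noteq> {}"
proof
  assume "V \<noteq> {}" "0 < max_degree V E" "E = {}"
  then have "degree E ` V = {0}" unfolding degree_def by auto
  then show False using \<open>0 < max_degree V E\<close> unfolding max_degree_def by simp
qed

lemma tree_drawing:
  fixes V :: "'a::linorder set" and \<epsilon> :: real
  assumes eps: "\<epsilon> > 0" and tree: "is_tree V E" and d2: "max_degree V E \<ge> 2"
  defines "M \<equiv> real (card V) powr
    (log 2 (2 + real_of_int \<lceil>2 / \<epsilon>\<rceil>) / log 2 (real (max_degree V E) / (real (max_degree V E) - 1)))"
  shows "\<exists>p. proper_drawing V E p \<and> no_three_collinear V p \<and> spanning_ratio V E p \<le> 1 + \<epsilon> \<and>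
    (\<forall>u\<in>V. \<forall>v\<in>V. u \<noteq> v \<longrightarrow> dist (p u) (p v) \<ge> 1) \<and>
    drawing_width V p \<le> M \<and> drawing_height V p \<le> M \<and> edge_length_ratio E p \<le> 2 * M"
proof -
  obtain x where "\<And>v. v \<in> V \<Longrightarrow> 0 \<le> x v \<and> x v \<le> M"
    and "\<And>u v. u \<in> V \<Longrightarrow> v \<in> V \<Longrightarrow> u \<noteq> v \<Longrightarrow> 1 \<le> \<bar>x u - x v\<bar> \<and> short_walk V E \<epsilon> x u v"
    using tree_line_layout[OF eps tree d2] unfolding M_def by blast
  moreover have "simple_graph V E" "E \<noteq> {}"
    using tree d2 max_degree_pos_edges_ne[of V E] unfolding is_tree_def by auto
  ultimately interpret parabola_lift V E \<epsilon> x M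
    using eps by unfold_locales auto
  show ?thesis
    using drawing_proper drawing_no_three_collinear drawing_spanning_ratio drawing_separated
      drawing_width_le drawing_height_le drawing_edge_length_ratio_le by blast
qed

theorem theorem7:
  shows "\<exists>C>0. \<forall>(V :: nat set) E (\<epsilon>::real).
     \<epsilon> > 0 \<longrightarrow> is_tree V E \<longrightarrow> max_degree V E \<ge> 2 \<longrightarrow>
     (let n = real (card V); d = real (max_degree V E);
          B = C * (n powr (log 2 (2 + real_of_int \<lceil>2 / \<epsilon>\<rceil>) / log 2 (d / (d - 1))))
                * max 1 (1 / \<epsilon>)
      in \<exists>p. proper_drawing V E p \<and> no_three_collinear V p \<and>
             spanning_ratio V E p \<le> 1 + \<epsilon> \<and>
             (\<forall>u\<in>V. \<forall>v\<in>V. u \<noteq> v \<longrightarrow> dist (p u) (p v) \<ge> 1) \<and>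
             drawing_width V p \<le> B \<and> drawing_height V p \<le> B \<and>
             edge_length_ratio E p \<le> B)"
proof (intro exI[of _ "2::real"] conjI allI impI)
  fix V :: "nat set" and E and \<epsilon> :: real
  assume tree: "\<epsilon> > 0" "is_tree V E" "max_degree V E \<ge> 2"
  define M where "M = real (card V) powr
    (log 2 (2 + real_of_int \<lceil>2 / \<epsilon>\<rceil>) / log 2 (real (max_degree V E) / (real (max_degree V E) - 1)))"
  have "0 \<le> M" unfolding M_def by simp
  moreover have "2 * M \<le> 2 * M * max 1 (1 / \<epsilon>)" using \<open>0 \<le> M\<close> by (simp add: mult_le_cancel_left1)
  ultimately have "M \<le> 2 * M * max 1 (1 / \<epsilon>)" "2 * M \<le> 2 * M * max 1 (1 / \<epsilon>)" by linarith+
  then show "let n = real (card V); d = real (max_degree V E);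
          B = 2 * (n powr (log 2 (2 + real_of_int \<lceil>2 / \<epsilon>\<rceil>) / log 2 (d / (d - 1))))
                * max 1 (1 / \<epsilon>)
      in \<exists>p. proper_drawing V E p \<and> no_three_collinear V p \<and>
             spanning_ratio V E p \<le> 1 + \<epsilon> \<and>
             (\<forall>u\<in>V. \<forall>v\<in>V. u \<noteq> v \<longrightarrow> dist (p u) (p v) \<ge> 1) \<and>
             drawing_width V p \<le> B \<and> drawing_height V p \<le> B \<and>
             edge_length_ratio E p \<le> B"
    using tree_drawing[OF tree] unfolding Let_def M_def[symmetric] by (meson order.trans)
qed simp

end
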